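(* Let $\Sigma$ be a complete hyperbolic surface without cusps and $L:=\Delta-2$. For all $R>0$ there exists $C>0$ with the following property: if $f$ is a twice-differentiable function on $\Sigma$ such that both $f$ and $Lf$ are bounded, and if $x\in\Sigma$ is such that $B_r(x)\cap\mathrm{Supp}(Lf)=\emptyset$ for some $r\geq R$, then $$|f(x)|\leq Ce^{-r}\|Lf\|_{L^\infty}.$$
   Context: $\Delta$ is the Laplace–Beltrami operator of the hyperbolic metric; $B_r(x)$ is the geodesic ball of radius $r$ about $x$. *)

theory Defs
  imports "HOL-Analysis.Analysis" "HOL-Probability.Essential_Supremum"
begin

definition HP :: "complex set" where
  "HP = {z. Im z > 0}"

definition hdist :: "complex \<Rightarrow> complex \<Rightarrow> real" where
  "hdist z w = arcosh (1 + (cmod (z - w))\<^sup>2 / (2 * Im z * Im w))"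

definition hball :: "complex \<Rightarrow> real \<Rightarrow> complex set" where
  "hball z r = {w \<in> HP. hdist z w < r}"

text \<open>Real 2x2 matrices (a,b,c,d), their product, and the Moebius action.\<close>
type_synonym mat2 = "real \<times> real \<times> real \<times> real"

definition mdet :: "mat2 \<Rightarrow> real" where
  "mdet M = (case M of (a,b,c,d) \<Rightarrow> a*d - b*c)"

definition mtrace :: "mat2 \<Rightarrow> real" where
  "mtrace M = (case M of (a,b,c,d) \<Rightarrow> a + d)"

definition mmult :: "mat2 \<Rightarrow> mat2 \<Rightarrow> mat2" where
  "mmult M N = (case M of (a,b,c,d) \<Rightarrow> case N of (a',b',c',d') \<Rightarrow>
      (a*a' + b*c', a*b' + b*d', c*a' + d*c', c*b' + d*d'))"

definition minv :: "mat2 \<Rightarrow> mat2" where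
  "minv M = (case M of (a,b,c,d) \<Rightarrow> (d, -b, -c, a))"

definition mid :: mat2 where "mid = (1,0,0,1)"

definition act :: "mat2 \<Rightarrow> complex \<Rightarrow> complex" where
  "act M z = (case M of (a,b,c,d) \<Rightarrow>
      (of_real a * z + of_real b) / (of_real c * z + of_real d))"

text \<open>A complete hyperbolic surface without cusps is \<open>HP / \<Gamma>\<close> for a torsion-free
  Fuchsian group \<open>\<Gamma> \<subseteq> SL(2,R)\<close> (discrete, acting freely and properly
  discontinuously on \<open>HP\<close>) containing no parabolic elements.\<close>
definition cuspfree_surface_group :: "mat2 set \<Rightarrow> bool" where
  "cuspfree_surface_group \<Gamma> \<longleftrightarrow>
     (\<forall>g\<in>\<Gamma>. mdet g = 1) \<and> mid \<in> \<Gamma> \<and>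
     (\<forall>g\<in>\<Gamma>. \<forall>h\<in>\<Gamma>. mmult g h \<in> \<Gamma>) \<and> (\<forall>g\<in>\<Gamma>. minv g \<in> \<Gamma>) \<and>
     (\<forall>K. compact K \<and> K \<subseteq> HP \<longrightarrow> finite {g\<in>\<Gamma>. act g ` K \<inter> K \<noteq> {}}) \<and>
     (\<forall>g\<in>\<Gamma>. \<forall>z\<in>HP. act g z = z \<longrightarrow> g = mid \<or> g = (-1,0,0,-1)) \<and>
     (\<forall>g\<in>\<Gamma>. g \<noteq> mid \<and> g \<noteq> (-1,0,0,-1) \<longrightarrow> \<bar>mtrace g\<bar> \<noteq> 2)"

text \<open>Functions on the surface = \<open>\<Gamma>\<close>-invariant functions on \<open>HP\<close>.\<close>
definition invariant_fun :: "mat2 set \<Rightarrow> (complex \<Rightarrow> real) \<Rightarrow> bool" where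
  "invariant_fun \<Gamma> f \<longleftrightarrow> (\<forall>g\<in>\<Gamma>. \<forall>z\<in>HP. f (act g z) = f z)"

definition px :: "(complex \<Rightarrow> real) \<Rightarrow> complex \<Rightarrow> real" where
  "px f z = deriv (\<lambda>t. f (z + of_real t)) 0"

definition py :: "(complex \<Rightarrow> real) \<Rightarrow> complex \<Rightarrow> real" where
  "py f z = deriv (\<lambda>t. f (z + \<i> * of_real t)) 0"

definition twice_diff_on :: "(complex \<Rightarrow> real) \<Rightarrow> complex set \<Rightarrow> bool" where
  "twice_diff_on f S \<longleftrightarrow> (\<forall>z\<in>S. f differentiable (at z) \<and>
      px f differentiable (at z) \<and> py f differentiable (at z))"

text \<open>Laplace-Beltrami operator of the hyperbolic metric \<open>y^{-2}(dx^2+dy^2)\<close>.\<close>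
definition hlap :: "(complex \<Rightarrow> real) \<Rightarrow> complex \<Rightarrow> real" where
  "hlap f z = (Im z)\<^sup>2 * (px (px f) z + py (py f) z)"

definition Lop :: "(complex \<Rightarrow> real) \<Rightarrow> complex \<Rightarrow> real" where
  "Lop f z = hlap f z - 2 * f z"

definition supp_HP :: "(complex \<Rightarrow> real) \<Rightarrow> complex set" where
  "supp_HP g = closure {z \<in> HP. g z \<noteq> 0} \<inter> HP"

end

theory Submission
  imports Defs
begin

(*
  Write psi_c(z) = cosh d(c, z) = 1 + |z - c|^2 / (2 Im c Im z). Then Delta psi_c = 2 psi_c, i.e.
  L psi_c = 0, and the sublevel sets of psi_c are compact (they are Euclidean discs). Comparison
  with multiples of psi_c gives two maximum principles for L = Delta - 2 on the hyperbolic plane.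

  (1) If f is bounded above and L f >= -M almost everywhere, then f <= M/2. The function
  f - eps psi_c attains its maximum; by Jensen's lemma a small tilt moves the maximum point to a
  point where L f >= -M holds, and there 2 f <= Delta f + M <= 2 eps psi_c + M up to small errors.

  (2) If f <= M/2 and L f = 0 on B_r(x), then G = f - (M / (2 cosh r)) psi_x is <= 0 on the
  sphere psi_x = cosh r, and at an interior maximum Delta G <= 0 together with L G = 0 forces
  G <= 0. Hence f(x) <= M / (2 cosh r) <= e^-r M.

  Applying both to f and -f with M = ||L f||_oo gives the estimate with C = 1 for every R.
*)

lemma mem_HP_iff: "z \<in> HP \<longleftrightarrow> 0 < Im z"
  by (simp add: HP_def)

lemma open_HP: "open HP"
  unfolding HP_def by (intro open_Collect_less continuous_intros)

lemma cball_subset_HP: "r < Im z \<Longrightarrow> cball z r \<subseteq> HP"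
proof
  fix w assume "r < Im z" "w \<in> cball z r"
  moreover have "Im z - Im w \<le> dist z w"
    using abs_Im_le_cmod[of "z - w"] by (simp add: dist_norm)
  ultimately show "w \<in> HP"
    by (simp add: mem_HP_iff)
qed

lemma HP_lebesgue: "HP \<in> sets lebesgue"
  by (intro sets_completionI_sets) (simp add: borel_open open_HP)

lemma not_negligible_HP: "\<not> negligible HP"
proof -
  have "\<i> \<in> HP" by (simp add: mem_HP_iff)
  then show ?thesis
    using open_not_negligible[OF open_HP] by blast
qed

section \<open>Partial derivatives\<close>

definition dir_deriv :: "complex \<Rightarrow> (complex \<Rightarrow> real) \<Rightarrow> complex \<Rightarrow> real" where
  "dir_deriv e g z = deriv (\<lambda>t. g (z + of_real t * e)) 0"

lemma px_dir_deriv: "px = dir_deriv 1"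
  and py_dir_deriv: "py = dir_deriv \<i>"
  by (simp_all add: fun_eq_iff px_def py_def dir_deriv_def mult.commute)

lemma has_real_derivative_along_line:
  fixes g :: "complex \<Rightarrow> real"
  assumes "(g has_derivative D) (at (z + of_real t * e))"
  shows "((\<lambda>s. g (z + of_real s * e)) has_real_derivative D e) (at t)"
proof -
  have "((\<lambda>s. z + of_real s * e) has_derivative (\<lambda>s. of_real s * e)) (at t)"
    by (auto intro!: derivative_eq_intros)
  from has_derivative_compose[OF this assms]
  have "((\<lambda>s. g (z + of_real s * e)) has_derivative (\<lambda>s. D (of_real s * e))) (at t)"
    by (simp add: o_def)
  moreover have "D (of_real s * e) = s * D e" for s
    using has_derivative_linear[OF assms]
    by (simp add: scaleR_conv_of_real[symmetric] linear_scale)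
  ultimately show ?thesis
    by (simp add: has_field_derivative_def mult.commute[of _ "D e"])
qed

lemma dir_deriv_eq: "(g has_derivative D) (at z) \<Longrightarrow> dir_deriv e g z = D e"
  using has_real_derivative_along_line[of g D z 0 e] by (simp add: dir_deriv_def DERIV_imp_deriv)

lemma px_eq: "(g has_derivative D) (at z) \<Longrightarrow> px g z = D 1"
  and py_eq: "(g has_derivative D) (at z) \<Longrightarrow> py g z = D \<i>"
  by (simp_all add: px_dir_deriv py_dir_deriv dir_deriv_eq)

lemma dir_deriv_cong:
  fixes g h :: "complex \<Rightarrow> real"
  assumes "open S" "z \<in> S" "\<And>w. w \<in> S \<Longrightarrow> g w = h w"
  shows "dir_deriv e g z = dir_deriv e h z"
  unfolding dir_deriv_def
proof (rule deriv_cong_ev)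
  have "((\<lambda>t::real. z + of_real t * e) \<longlongrightarrow> z) (nhds 0)"
    by (auto intro!: tendsto_eq_intros filterlim_ident)
  then have "eventually (\<lambda>t. z + of_real t * e \<in> S) (nhds 0)"
    using assms(1,2) by (rule topological_tendstoD)
  then show "eventually (\<lambda>t. g (z + of_real t * e) = h (z + of_real t * e)) (nhds 0)"
    by (rule eventually_mono) (use assms(3) in auto)
qed simp

lemma px_cong: "open S \<Longrightarrow> z \<in> S \<Longrightarrow> (\<And>w. w \<in> S \<Longrightarrow> g w = h w) \<Longrightarrow> px g z = px h z"
  and py_cong: "open S \<Longrightarrow> z \<in> S \<Longrightarrow> (\<And>w. w \<in> S \<Longrightarrow> g w = h w) \<Longrightarrow> py g z = py h z"
  unfolding px_dir_deriv py_dir_deriv by (rule dir_deriv_cong; assumption)+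

lemma partials_lincomb:
  fixes f h :: "complex \<Rightarrow> real"
  assumes "f differentiable (at z)" "h differentiable (at z)"
  shows "px (\<lambda>w. a * f w + b * h w) z = a * px f z + b * px h z"
    and "py (\<lambda>w. a * f w + b * h w) z = a * py f z + b * py h z"
proof -
  obtain Df Dh where f: "(f has_derivative Df) (at z)" and h: "(h has_derivative Dh) (at z)"
    using assms unfolding differentiable_def by blast
  have "((\<lambda>w. a * f w + b * h w) has_derivative (\<lambda>v. a * Df v + b * Dh v)) (at z)"
    by (auto intro!: derivative_eq_intros f h)
  then show "px (\<lambda>w. a * f w + b * h w) z = a * px f z + b * px h z"
    and "py (\<lambda>w. a * f w + b * h w) z = a * py f z + b * py h z"
    using f h by (simp_all add: px_eq py_eq)
qed

lemma differentiable_transform_open: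
  "g differentiable (at z) \<Longrightarrow> open S \<Longrightarrow> z \<in> S \<Longrightarrow> (\<And>w. w \<in> S \<Longrightarrow> g w = h w)
    \<Longrightarrow> h differentiable (at z)"
  unfolding differentiable_def using has_derivative_transform_within_open by blast

lemma
  fixes f h :: "complex \<Rightarrow> real"
  assumes S: "open S" and f: "twice_diff_on f S" and h: "twice_diff_on h S"
  shows twice_diff_on_lincomb: "twice_diff_on (\<lambda>w. a * f w + b * h w) S"
    and hlap_lincomb: "z \<in> S \<Longrightarrow> hlap (\<lambda>w. a * f w + b * h w) z = a * hlap f z + b * hlap h z"
    and px_lincomb: "z \<in> S \<Longrightarrow> px (\<lambda>w. a * f w + b * h w) z = a * px f z + b * px h z"
    and py_lincomb: "z \<in> S \<Longrightarrow> py (\<lambda>w. a * f w + b * h w) z = a * py f z + b * py h z"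
proof -
  let ?g = "\<lambda>w. a * f w + b * h w"
  have d: "f differentiable (at w)" "h differentiable (at w)"
    "px f differentiable (at w)" "px h differentiable (at w)"
    "py f differentiable (at w)" "py h differentiable (at w)" if "w \<in> S" for w
    using f h that by (auto simp: twice_diff_on_def)
  have px: "px ?g w = a * px f w + b * px h w"
    and py: "py ?g w = a * py f w + b * py h w" if "w \<in> S" for w
    using partials_lincomb d[OF that] by blast+
  show "px ?g z = a * px f z + b * px h z" "py ?g z = a * py f z + b * py h z" if "z \<in> S"
    using px py that by blast+
  show "twice_diff_on ?g S"
    unfolding twice_diff_on_def
  proof (intro ballI conjI)
    fix z assume z: "z \<in> S"
    show "?g differentiable (at z)"
      using d[OF z] by (auto intro!: derivative_intros)
    show "px ?g differentiable (at z)"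
      by (rule differentiable_transform_open[OF _ S z px[symmetric]])
        (use d[OF z] in \<open>auto intro!: derivative_intros\<close>)
    show "py ?g differentiable (at z)"
      by (rule differentiable_transform_open[OF _ S z py[symmetric]])
        (use d[OF z] in \<open>auto intro!: derivative_intros\<close>)
  qed
  assume z: "z \<in> S"
  have "px (px ?g) z = px (\<lambda>w. a * px f w + b * px h w) z"
    using px_cong[OF S z px] .
  also have "\<dots> = a * px (px f) z + b * px (px h) z"
    using partials_lincomb(1) d(3,4)[OF z] .
  finally have xx: "px (px ?g) z = a * px (px f) z + b * px (px h) z" .
  have "py (py ?g) z = py (\<lambda>w. a * py f w + b * py h w) z"
    using py_cong[OF S z py] .
  also have "\<dots> = a * py (py f) z + b * py (py h) z"
    using partials_lincomb(2) d(5,6)[OF z] .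
  finally have yy: "py (py ?g) z = a * py (py f) z + b * py (py h) z" .
  show "hlap ?g z = a * hlap f z + b * hlap h z"
    unfolding hlap_def xx yy by (simp add: algebra_simps)
qed

lemma Lop_lincomb:
  "open S \<Longrightarrow> twice_diff_on f S \<Longrightarrow> twice_diff_on h S \<Longrightarrow> z \<in> S \<Longrightarrow>
    Lop (\<lambda>w. a * f w + b * h w) z = a * Lop f z + b * Lop h z"
  by (simp add: Lop_def hlap_lincomb algebra_simps)

lemma
  assumes "open S" "twice_diff_on f S"
  shows twice_diff_on_uminus: "twice_diff_on (\<lambda>z. - f z) S"
    and Lop_uminus: "z \<in> S \<Longrightarrow> Lop (\<lambda>z. - f z) z = - Lop f z"
proof -
  have eq: "(\<lambda>z. - f z) = (\<lambda>z. (-1) * f z + 0 * f z)"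
    by simp
  show "twice_diff_on (\<lambda>z. - f z) S"
    unfolding eq by (rule twice_diff_on_lincomb[OF assms(1,2,2)])
  show "Lop (\<lambda>z. - f z) z = - Lop f z" if "z \<in> S"
    using Lop_lincomb[OF assms(1,2,2) that, where a = "-1" and b = 0] by simp
qed

lemma twice_diff_on_imp_continuous_on: "twice_diff_on f S \<Longrightarrow> continuous_on S f"
  unfolding twice_diff_on_def
  by (meson continuous_at_imp_continuous_on differentiable_imp_continuous_within)

lemma
  fixes h hx hy hxx hxy hyx hyy :: "complex \<Rightarrow> real"
  assumes S: "open S"
    and h: "\<And>z. z \<in> S \<Longrightarrow> (h has_derivative (\<lambda>v. hx z * Re v + hy z * Im v)) (at z)"
    and hx: "\<And>z. z \<in> S \<Longrightarrow> (hx has_derivative (\<lambda>v. hxx z * Re v + hxy z * Im v)) (at z)"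
    and hy: "\<And>z. z \<in> S \<Longrightarrow> (hy has_derivative (\<lambda>v. hyx z * Re v + hyy z * Im v)) (at z)"
  shows twice_diff_onI_partials: "twice_diff_on h S"
    and px_partials: "z \<in> S \<Longrightarrow> px h z = hx z"
    and py_partials: "z \<in> S \<Longrightarrow> py h z = hy z"
    and hlap_partials: "z \<in> S \<Longrightarrow> hlap h z = (Im z)\<^sup>2 * (hxx z + hyy z)"
proof -
  have px: "px h w = hx w" and py: "py h w = hy w" if "w \<in> S" for w
    using px_eq[OF h[OF that]] py_eq[OF h[OF that]] by simp_all
  show "px h z = hx z" "py h z = hy z" if "z \<in> S"
    using px py that by blast+
  show "twice_diff_on h S"
    unfolding twice_diff_on_def
  proof (intro ballI conjI)
    fix z assume z: "z \<in> S"
    show "h differentiable (at z)"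
      using h[OF z] unfolding differentiable_def by blast
    show "px h differentiable (at z)"
      by (rule differentiable_transform_open[OF _ S z px[symmetric]])
        (use hx[OF z] in \<open>auto simp: differentiable_def\<close>)
    show "py h differentiable (at z)"
      by (rule differentiable_transform_open[OF _ S z py[symmetric]])
        (use hy[OF z] in \<open>auto simp: differentiable_def\<close>)
  qed
  assume z: "z \<in> S"
  have "px (px h) z = hxx z"
    using px_cong[OF S z px] px_eq[OF hx[OF z]] by simp
  moreover have "py (py h) z = hyy z"
    using py_cong[OF S z py] py_eq[OF hy[OF z]] by simp
  ultimately show "hlap h z = (Im z)\<^sup>2 * (hxx z + hyy z)"
    by (simp add: hlap_def)
qed

section \<open>Local maxima\<close>

lemma real_local_max_derivs:
  fixes k m :: "real \<Rightarrow> real"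
  assumes d: "0 < d" and k: "\<And>t. \<bar>t\<bar> < d \<Longrightarrow> (k has_real_derivative m t) (at t)"
    and m: "(m has_real_derivative c) (at 0)" and max: "\<And>t. \<bar>t\<bar> < d \<Longrightarrow> k t \<le> k 0"
  shows "m 0 = 0" and "c \<le> 0"
proof -
  show m0: "m 0 = 0"
    by (rule DERIV_local_max[OF k[of 0] d]) (use d max in auto)
  show "c \<le> 0"
  proof (rule ccontr)
    assume "\<not> c \<le> 0"
    from DERIV_pos_inc_right[OF m] this obtain e where e: "0 < e"
      and inc: "\<And>h. 0 < h \<Longrightarrow> h < e \<Longrightarrow> m 0 < m (0 + h)" by force
    define t where "t = min e d / 2"
    have t: "0 < t" "t < e" "t < d" using e d by (auto simp: t_def)
    obtain s where s: "0 < s" "s < t" "k t - k 0 = (t - 0) * m s"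
      using MVT2[OF t(1), of k m] k t by force
    have "0 < m s" using inc[of s] s t m0 by simp
    then have "k 0 < k t" using s t by (simp add: algebra_simps)
    with max[of t] t show False by simp
  qed
qed

lemma local_max_along_line:
  fixes u :: "complex \<Rightarrow> real"
  assumes d: "0 < d"
    and u: "\<And>t. \<bar>t\<bar> < d \<Longrightarrow> u differentiable (at (z + of_real t * e))"
    and du: "dir_deriv e u differentiable (at z)"
    and max: "\<And>t. \<bar>t\<bar> < d \<Longrightarrow> u (z + of_real t * e) \<le> u z"
  shows "dir_deriv e u z = 0" and "dir_deriv e (dir_deriv e u) z \<le> 0"
proof -
  have k: "((\<lambda>s. u (z + of_real s * e)) has_real_derivative dir_deriv e u (z + of_real t * e)) (at t)"
    if t: "\<bar>t\<bar> < d" for t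
  proof -
    obtain D where D: "(u has_derivative D) (at (z + of_real t * e))"
      using u[OF t] unfolding differentiable_def by blast
    show ?thesis
      using has_real_derivative_along_line[OF D] dir_deriv_eq[OF D] by simp
  qed
  obtain D' where D': "(dir_deriv e u has_derivative D') (at z)"
    using du unfolding differentiable_def by blast
  have "((\<lambda>t. dir_deriv e u (z + of_real t * e)) has_real_derivative D' e) (at 0)"
    using has_real_derivative_along_line[of _ D' z 0 e] D' by simp
  note derivs = real_local_max_derivs[where m = "\<lambda>t. dir_deriv e u (z + of_real t * e)", OF d k this]
  show "dir_deriv e u z = 0"
    using derivs(1) max by simp
  show "dir_deriv e (dir_deriv e u) z \<le> 0"
    using derivs(2) max dir_deriv_eq[OF D'] by simp
qed

lemma local_max_partials:
  fixes u :: "complex \<Rightarrow> real"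
  assumes u: "twice_diff_on u S" and ball: "ball z \<rho> \<subseteq> S" and \<rho>: "0 < \<rho>"
    and max: "\<And>w. w \<in> ball z \<rho> \<Longrightarrow> u w \<le> u z"
  shows "px u z = 0" and "py u z = 0" and "hlap u z \<le> 0"
proof -
  have z: "z \<in> S" using ball \<rho> by auto
  have "dir_deriv e u z = 0 \<and> dir_deriv e (dir_deriv e u) z \<le> 0" if e: "e = 1 \<or> e = \<i>" for e
  proof -
    have on_line: "z + of_real t * e \<in> ball z \<rho>" if "\<bar>t\<bar> < \<rho>" for t
      using that e by (auto simp: dist_norm norm_mult)
    have "dir_deriv e u differentiable (at z)"
      using u z e unfolding twice_diff_on_def px_dir_deriv py_dir_deriv by auto
    moreover have "u differentiable (at (z + of_real t * e))" if "\<bar>t\<bar> < \<rho>" for t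
      using u ball on_line[OF that] unfolding twice_diff_on_def by blast
    ultimately show ?thesis
      using local_max_along_line[OF \<rho>] max on_line by blast
  qed
  then have "px u z = 0" "py u z = 0" "px (px u) z \<le> 0" "py (py u) z \<le> 0"
    unfolding px_dir_deriv py_dir_deriv by blast+
  then show "px u z = 0" "py u z = 0" "hlap u z \<le> 0"
    by (simp_all add: hlap_def mult_nonneg_nonpos)
qed

section \<open>Cosine of the hyperbolic distance\<close>

definition cosh_dist :: "complex \<Rightarrow> complex \<Rightarrow> real" where
  "cosh_dist c z = (Re z - Re c)\<^sup>2 / (2 * Im c * Im z) + Im z / (2 * Im c) + Im c / (2 * Im z)"

lemma cosh_dist_eq:
  "0 < Im c \<Longrightarrow> 0 < Im z \<Longrightarrow> cosh_dist c z = 1 + (cmod (c - z))\<^sup>2 / (2 * Im c * Im z)"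
  unfolding cosh_dist_def cmod_power2 by (simp add: field_simps power2_eq_square)

lemma cosh_dist_ge_1: "c \<in> HP \<Longrightarrow> z \<in> HP \<Longrightarrow> 1 \<le> cosh_dist c z"
  by (simp add: mem_HP_iff cosh_dist_eq)

lemma cosh_dist_self [simp]: "c \<in> HP \<Longrightarrow> cosh_dist c c = 1"
  by (simp add: mem_HP_iff cosh_dist_eq)

lemma cosh_hdist: "c \<in> HP \<Longrightarrow> z \<in> HP \<Longrightarrow> cosh (hdist c z) = cosh_dist c z"
  by (simp add: hdist_def mem_HP_iff cosh_dist_eq)

lemma hball_eq_cosh_dist_sublevel:
  assumes "c \<in> HP" "0 \<le> r"
  shows "hball c r = {z \<in> HP. cosh_dist c z < cosh r}"
proof -
  have "hdist c z < r \<longleftrightarrow> cosh (hdist c z) < cosh r" if "z \<in> HP" for z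
    using assms that cosh_dist_ge_1
    by (intro cosh_real_nonneg_less_iff[symmetric]) (simp_all add: hdist_def cosh_dist_eq mem_HP_iff)
  then show ?thesis
    using assms by (auto simp: hball_def cosh_hdist)
qed

lemma cosh_dist_sublevel_eq_cball:
  assumes c: "c \<in> HP" and K: "1 \<le> K"
  shows "{z \<in> HP. cosh_dist c z \<le> K} = cball (Complex (Re c) (Im c * K)) (Im c * sqrt (K\<^sup>2 - 1))"
proof -
  define m where "m = Complex (Re c) (Im c * K)"
  define \<rho> where "\<rho> = Im c * sqrt (K\<^sup>2 - 1)"
  have b: "0 < Im c" using c by (simp add: mem_HP_iff)
  have \<rho>: "0 \<le> \<rho>" using b K by (simp add: \<rho>_def)
  have "sqrt (K\<^sup>2 - 1) < sqrt (K\<^sup>2)"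
    by (rule real_sqrt_less_mono) simp
  then have \<rho>_less: "\<rho> < Im c * K"
    using b K by (simp add: \<rho>_def)
  have \<rho>2: "\<rho>\<^sup>2 = (Im c)\<^sup>2 * (K\<^sup>2 - 1)"
    using K by (simp add: \<rho>_def power_mult_distrib)
  have dist2: "(dist m z)\<^sup>2 = (Re z - Re c)\<^sup>2 + (Im z - Im c * K)\<^sup>2" for z
    by (simp add: m_def dist_norm cmod_power2 power2_commute)
  have key: "cosh_dist c z \<le> K \<longleftrightarrow> (dist m z)\<^sup>2 \<le> \<rho>\<^sup>2" if "0 < Im z" for z
  proof -
    have "cosh_dist c z \<le> K \<longleftrightarrow>
        (Re z - Re c)\<^sup>2 + (Im z)\<^sup>2 + (Im c)\<^sup>2 \<le> 2 * K * Im c * Im z"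
      using b that by (simp add: cosh_dist_def field_simps power2_eq_square)
    also have "\<dots> \<longleftrightarrow> (dist m z)\<^sup>2 \<le> \<rho>\<^sup>2"
      unfolding dist2 \<rho>2 by (simp add: power2_eq_square algebra_simps)
    finally show ?thesis .
  qed
  have "dist m z \<le> \<rho> \<longleftrightarrow> (dist m z)\<^sup>2 \<le> \<rho>\<^sup>2" for z
    using \<rho> by (simp add: abs_le_square_iff[symmetric])
  moreover have "0 < Im z" if "dist m z \<le> \<rho>" for z
  proof -
    have "Im c * K - Im z \<le> dist m z"
      using abs_Im_le_cmod[of "m - z"] by (simp add: m_def dist_norm)
    then show ?thesis using that \<rho>_less by linarith
  qed
  ultimately show ?thesis
    unfolding m_def[symmetric] \<rho>_def[symmetric] using key by (auto simp: mem_HP_iff)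
qed

lemma compact_cosh_dist_sublevel:
  assumes "c \<in> HP"
  shows "compact {z \<in> HP. cosh_dist c z \<le> K}"
proof (cases "1 \<le> K")
  case False
  then have "{z \<in> HP. cosh_dist c z \<le> K} = {}"
    using cosh_dist_ge_1[OF assms] by force
  then show ?thesis by (metis compact_empty)
qed (simp add: assms cosh_dist_sublevel_eq_cball)

lemma
  assumes c: "c \<in> HP"
  shows twice_diff_on_cosh_dist: "twice_diff_on (cosh_dist c) HP"
    and Lop_cosh_dist: "z \<in> HP \<Longrightarrow> Lop (cosh_dist c) z = 0"
proof -
  let ?a = "Re c" and ?b = "Im c"
  have b: "0 < ?b" using c by (simp add: mem_HP_iff)
  have d0: "(cosh_dist c has_derivative (\<lambda>v.
      ((Re z - ?a) / (?b * Im z)) * Re v +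
      (1 / (2 * ?b) - (Re z - ?a)\<^sup>2 / (2 * ?b * (Im z)\<^sup>2) - ?b / (2 * (Im z)\<^sup>2)) * Im v)) (at z)"
    if "z \<in> HP" for z
    using that b unfolding cosh_dist_def[abs_def] mem_HP_iff
    by (auto intro!: derivative_eq_intros ext simp: field_simps power2_eq_square)
  have d1: "((\<lambda>z. (Re z - ?a) / (?b * Im z)) has_derivative (\<lambda>v.
      (1 / (?b * Im z)) * Re v + (- (Re z - ?a) / (?b * (Im z)\<^sup>2)) * Im v)) (at z)"
    if "z \<in> HP" for z
    using that b unfolding mem_HP_iff
    by (auto intro!: derivative_eq_intros ext simp: field_simps power2_eq_square)
  have d2: "((\<lambda>z. 1 / (2 * ?b) - (Re z - ?a)\<^sup>2 / (2 * ?b * (Im z)\<^sup>2) - ?b / (2 * (Im z)\<^sup>2))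
      has_derivative (\<lambda>v. (- (Re z - ?a) / (?b * (Im z)\<^sup>2)) * Re v +
        ((Re z - ?a)\<^sup>2 / (?b * (Im z) ^ 3) + ?b / (Im z) ^ 3) * Im v)) (at z)"
    if "z \<in> HP" for z
    using that b unfolding mem_HP_iff
    by (auto intro!: derivative_eq_intros ext simp: field_simps power2_eq_square power3_eq_cube)
  note partials = d0 d1 d2
  show "twice_diff_on (cosh_dist c) HP"
    using twice_diff_onI_partials[OF open_HP partials] .
  assume z: "z \<in> HP"
  have "hlap (cosh_dist c) z =
      (Im z)\<^sup>2 * (1 / (?b * Im z) + ((Re z - ?a)\<^sup>2 / (?b * (Im z) ^ 3) + ?b / (Im z) ^ 3))"
    by (rule hlap_partials[OF open_HP partials z])
  also have "\<dots> = 2 * cosh_dist c z"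
    using z b by (simp add: cosh_dist_def mem_HP_iff field_simps power2_eq_square power3_eq_cube)
  finally show "Lop (cosh_dist c) z = 0"
    by (simp add: Lop_def)
qed

lemma
  assumes f: "twice_diff_on f HP" and c: "c \<in> HP"
  shows twice_diff_on_minus_cosh_dist: "twice_diff_on (\<lambda>z. f z - A * cosh_dist c z) HP"
    and Lop_minus_cosh_dist: "z \<in> HP \<Longrightarrow> Lop (\<lambda>z. f z - A * cosh_dist c z) z = Lop f z"
proof -
  have eq: "(\<lambda>z. f z - A * cosh_dist c z) = (\<lambda>z. 1 * f z + (- A) * cosh_dist c z)"
    by simp
  show "twice_diff_on (\<lambda>z. f z - A * cosh_dist c z) HP"
    unfolding eq by (rule twice_diff_on_lincomb[OF open_HP f twice_diff_on_cosh_dist[OF c]])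
  show "Lop (\<lambda>z. f z - A * cosh_dist c z) z = Lop f z" if "z \<in> HP"
    using Lop_lincomb[OF open_HP f twice_diff_on_cosh_dist[OF c] that, where a = 1 and b = "- A"]
      Lop_cosh_dist[OF c that] by simp
qed

lemma open_hball: "c \<in> HP \<Longrightarrow> 0 \<le> r \<Longrightarrow> open (hball c r)"
  using continuous_open_preimage[OF twice_diff_on_imp_continuous_on[OF twice_diff_on_cosh_dist]
      open_HP open_lessThan]
  by (simp add: hball_eq_cosh_dist_sublevel vimage_def Int_def)

section \<open>Jensen's lemma\<close>

definition tilted_paraboloid :: "real \<Rightarrow> complex \<Rightarrow> complex \<Rightarrow> complex \<Rightarrow> real" where
  "tilted_paraboloid \<delta> z0 p z = \<delta> * (cmod (z - z0))\<^sup>2 + inner p (z - z0)"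

lemma
  shows twice_diff_on_tilted_paraboloid: "twice_diff_on (tilted_paraboloid \<delta> z0 p) S"
    and px_tilted_paraboloid: "px (tilted_paraboloid \<delta> z0 p) z = 2 * \<delta> * Re (z - z0) + Re p"
    and py_tilted_paraboloid: "py (tilted_paraboloid \<delta> z0 p) z = 2 * \<delta> * Im (z - z0) + Im p"
    and hlap_tilted_paraboloid: "hlap (tilted_paraboloid \<delta> z0 p) z = 4 * \<delta> * (Im z)\<^sup>2"
proof -
  have eq: "tilted_paraboloid \<delta> z0 p =
      (\<lambda>z. \<delta> * ((Re z - Re z0)\<^sup>2 + (Im z - Im z0)\<^sup>2) + (Re p * (Re z - Re z0) + Im p * (Im z - Im z0)))"
    by (simp add: fun_eq_iff tilted_paraboloid_def cmod_power2 inner_complex_def)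
  have partials:
    "(tilted_paraboloid \<delta> z0 p has_derivative
       (\<lambda>v. (2 * \<delta> * (Re z - Re z0) + Re p) * Re v + (2 * \<delta> * (Im z - Im z0) + Im p) * Im v)) (at z)"
    "((\<lambda>z. 2 * \<delta> * (Re z - Re z0) + Re p) has_derivative (\<lambda>v. (2 * \<delta>) * Re v + 0 * Im v)) (at z)"
    "((\<lambda>z. 2 * \<delta> * (Im z - Im z0) + Im p) has_derivative (\<lambda>v. 0 * Re v + (2 * \<delta>) * Im v)) (at z)"
    if "z \<in> UNIV" for z
    unfolding eq by (auto intro!: derivative_eq_intros ext simp: algebra_simps power2_eq_square)
  note explicit = twice_diff_onI_partials[OF open_UNIV partials]
    px_partials[OF open_UNIV partials] py_partials[OF open_UNIV partials]
    hlap_partials[OF open_UNIV partials]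
  show "twice_diff_on (tilted_paraboloid \<delta> z0 p) S"
    using explicit(1) by (simp add: twice_diff_on_def)
  show "px (tilted_paraboloid \<delta> z0 p) z = 2 * \<delta> * Re (z - z0) + Re p"
    "py (tilted_paraboloid \<delta> z0 p) z = 2 * \<delta> * Im (z - z0) + Im p"
    "hlap (tilted_paraboloid \<delta> z0 p) z = 4 * \<delta> * (Im z)\<^sup>2"
    using explicit(2-4) by simp_all
qed

definition grad :: "(complex \<Rightarrow> real) \<Rightarrow> complex \<Rightarrow> complex" where
  "grad u z = Complex (px u z) (py u z)"

lemma negligible_grad_image:
  assumes u: "twice_diff_on u S" and N: "negligible N" "N \<subseteq> S"
  shows "negligible (grad u ` N)"
proof (rule negligible_differentiable_image_negligible[OF order_refl N(1)])
  have "grad u differentiable (at z)" if "z \<in> S" for z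
  proof -
    have "px u differentiable (at z)" "py u differentiable (at z)"
      using u that by (simp_all add: twice_diff_on_def)
    then obtain Dx Dy where Dx: "(px u has_derivative Dx) (at z)" and Dy: "(py u has_derivative Dy) (at z)"
      unfolding differentiable_def by blast
    have "(grad u has_derivative (\<lambda>h. of_real (Dx h) + \<i> * of_real (Dy h))) (at z)"
      unfolding grad_def[abs_def] Complex_eq by (auto intro!: derivative_eq_intros Dx Dy)
    then show ?thesis
      unfolding differentiable_def by blast
  qed
  then show "grad u differentiable_on N"
    using N(2) unfolding differentiable_on_def by (meson differentiable_at_withinI subsetD)
qed

lemma tilted_maximum_in_ball:
  fixes u :: "complex \<Rightarrow> real"
  assumes u: "continuous_on (cball z0 \<rho>) u" and \<rho>: "0 < \<rho>" and p: "cmod p < \<delta> * \<rho>"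
    and max: "\<And>z. z \<in> cball z0 \<rho> \<Longrightarrow> u z \<le> u z0"
  defines "g \<equiv> \<lambda>z. u z - tilted_paraboloid \<delta> z0 p z"
  shows "\<exists>z1\<in>ball z0 \<rho>. (\<forall>z\<in>cball z0 \<rho>. g z \<le> g z1) \<and> u z0 \<le> u z1 + \<delta> * \<rho>\<^sup>2"
proof -
  have "continuous_on (cball z0 \<rho>) g"
    unfolding g_def tilted_paraboloid_def by (intro continuous_intros u)
  then obtain z1 where z1: "z1 \<in> cball z0 \<rho>" and z1_max: "\<And>z. z \<in> cball z0 \<rho> \<Longrightarrow> g z \<le> g z1"
    using continuous_attains_sup[OF compact_cball] \<rho> by (metis centre_in_cball empty_iff less_le)
  have "0 < \<delta> * \<rho>"
    using p norm_ge_zero[of p] by linarith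
  with \<rho> have \<delta>: "0 < \<delta>"
    by (simp add: zero_less_mult_iff)
  have ge: "u z0 \<le> g z1"
    using z1_max[of z0] \<rho> by (simp add: g_def tilted_paraboloid_def)
  have tilt: "\<bar>inner p (z1 - z0)\<bar> \<le> cmod p * cmod (z1 - z0)"
    by (rule Cauchy_Schwarz_ineq2)
  have "z1 \<in> ball z0 \<rho>"
  proof (rule ccontr)
    assume "z1 \<notin> ball z0 \<rho>"
    then have dz: "cmod (z1 - z0) = \<rho>"
      using z1 by (simp add: dist_norm norm_minus_commute)
    have "cmod p * \<rho> < \<delta> * \<rho>\<^sup>2"
      using p \<rho> by (simp add: power2_eq_square)
    then have "g z1 < u z1"
      using tilt dz by (simp add: g_def tilted_paraboloid_def abs_le_iff)
    then show False
      using max[OF z1] ge by simp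
  qed
  have "cmod p * cmod (z1 - z0) \<le> (\<delta> * \<rho>) * \<rho>"
    using p z1 \<delta> \<rho> by (intro mult_mono) (auto simp: dist_norm norm_minus_commute)
  moreover have "0 \<le> \<delta> * (cmod (z1 - z0))\<^sup>2"
    using \<delta> by simp
  ultimately have "g z1 \<le> u z1 + \<delta> * \<rho>\<^sup>2"
    using tilt unfolding g_def tilted_paraboloid_def power2_eq_square abs_le_iff by linarith
  with \<open>z1 \<in> ball z0 \<rho>\<close> z1_max ge show ?thesis
    by force
qed

lemma tilted_maximum_critical:
  fixes u :: "complex \<Rightarrow> real"
  assumes S: "open S" and u: "twice_diff_on u S" and ball: "cball z0 \<rho> \<subseteq> S" and z1: "z1 \<in> ball z0 \<rho>"
    and max: "\<And>z. z \<in> cball z0 \<rho> \<Longrightarrow>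
      u z - tilted_paraboloid \<delta> z0 p z \<le> u z1 - tilted_paraboloid \<delta> z0 p z1"
  shows "grad (\<lambda>z. u z - tilted_paraboloid \<delta> z0 0 z) z1 = p"
    and "hlap u z1 \<le> 4 * \<delta> * (Im z1)\<^sup>2"
proof -
  define g where "g q = (\<lambda>z. 1 * u z + (-1) * tilted_paraboloid \<delta> z0 q z)" for q
  have g: "twice_diff_on (g q) S" for q
    unfolding g_def by (intro twice_diff_on_lincomb S u twice_diff_on_tilted_paraboloid)
  have z1S: "z1 \<in> S" using z1 ball by auto
  have sub: "ball z1 (\<rho> - dist z0 z1) \<subseteq> cball z0 \<rho>"
  proof
    fix z assume "z \<in> ball z1 (\<rho> - dist z0 z1)"
    then show "z \<in> cball z0 \<rho>" using dist_triangle[of z0 z z1] by simp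
  qed
  have r: "0 < \<rho> - dist z0 z1" using z1 by simp
  have "g p z \<le> g p z1" if "z \<in> ball z1 (\<rho> - dist z0 z1)" for z
    using max sub that by (auto simp: g_def)
  note crit = local_max_partials[OF g order_trans[OF sub ball] r this]
  have "px (g q) z1 = 1 * px u z1 + (-1) * px (tilted_paraboloid \<delta> z0 q) z1"
    and "py (g q) z1 = 1 * py u z1 + (-1) * py (tilted_paraboloid \<delta> z0 q) z1"
    and "hlap (g q) z1 = 1 * hlap u z1 + (-1) * hlap (tilted_paraboloid \<delta> z0 q) z1" for q
    unfolding g_def using S u twice_diff_on_tilted_paraboloid z1S
    by (rule px_lincomb py_lincomb hlap_lincomb)+
  with crit show "grad (\<lambda>z. u z - tilted_paraboloid \<delta> z0 0 z) z1 = p"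
    and "hlap u z1 \<le> 4 * \<delta> * (Im z1)\<^sup>2"
    by (simp_all add: g_def grad_def complex_eq_iff px_tilted_paraboloid py_tilted_paraboloid
        hlap_tilted_paraboloid)
qed

text \<open>For \<open>cmod p < \<delta> * \<rho>\<close> the function \<open>u\<close> minus the paraboloid tilted by \<open>p\<close>
  has an interior maximum, at which the gradient of \<open>u z - \<delta> * (cmod (z - z0))\<^sup>2\<close> equals \<open>p\<close>.
  That gradient is differentiable, so the tilts whose maxima lie in \<open>N\<close> form a null set.\<close>
lemma perturbed_maximum_off_negligible:
  fixes u :: "complex \<Rightarrow> real"
  assumes S: "open S" and u: "twice_diff_on u S" and N: "negligible N"
    and \<delta>: "0 < \<delta>" and \<rho>: "0 < \<rho>" and ball: "cball z0 \<rho> \<subseteq> S"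
    and max: "\<And>z. z \<in> cball z0 \<rho> \<Longrightarrow> u z \<le> u z0"
  obtains z1 where "z1 \<in> ball z0 \<rho>" "z1 \<notin> N" "u z0 \<le> u z1 + \<delta> * \<rho>\<^sup>2"
    "hlap u z1 \<le> 4 * \<delta> * (Im z1)\<^sup>2"
proof -
  define g0 where "g0 z = u z - tilted_paraboloid \<delta> z0 0 z" for z
  have u_cont: "continuous_on (cball z0 \<rho>) u"
    using twice_diff_on_imp_continuous_on[OF u] ball by (rule continuous_on_subset)
  have good: "\<exists>z1\<in>ball z0 \<rho>. grad g0 z1 = p \<and> u z0 \<le> u z1 + \<delta> * \<rho>\<^sup>2 \<and> hlap u z1 \<le> 4 * \<delta> * (Im z1)\<^sup>2"
    if "p \<in> ball 0 (\<delta> * \<rho>)" for p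
  proof -
    from that have "cmod p < \<delta> * \<rho>" by simp
    from tilted_maximum_in_ball[OF u_cont \<rho> this max] obtain z1 where "z1 \<in> ball z0 \<rho>"
      "\<And>z. z \<in> cball z0 \<rho> \<Longrightarrow> u z - tilted_paraboloid \<delta> z0 p z \<le> u z1 - tilted_paraboloid \<delta> z0 p z1"
      "u z0 \<le> u z1 + \<delta> * \<rho>\<^sup>2"
      by blast
    with tilted_maximum_critical[OF S u ball, of z1 \<delta> p] show ?thesis
      unfolding g0_def[abs_def] by blast
  qed
  have "g0 = (\<lambda>z. 1 * u z + (-1) * tilted_paraboloid \<delta> z0 0 z)"
    by (simp add: g0_def fun_eq_iff)
  then have g0: "twice_diff_on g0 S"
    by (simp only:) (intro twice_diff_on_lincomb S u twice_diff_on_tilted_paraboloid)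
  have "\<not> negligible (ball (0::complex) (\<delta> * \<rho>))"
    using mult_pos_pos[OF \<delta> \<rho>] by (intro open_not_negligible) auto
  moreover have "negligible (grad g0 ` (N \<inter> ball z0 \<rho>))"
    using negligible_subset[OF N] ball by (intro negligible_grad_image[OF g0]) auto
  ultimately obtain p where "p \<in> ball 0 (\<delta> * \<rho>)" "p \<notin> grad g0 ` (N \<inter> ball z0 \<rho>)"
    using negligible_subset by blast
  with good that show thesis
    by blast
qed

section \<open>Maximum principles for \<open>L\<close>\<close>

lemma cosh_dist_penalized_attains_max:
  fixes f :: "complex \<Rightarrow> real"
  assumes f: "continuous_on HP f" and B: "\<And>z. z \<in> HP \<Longrightarrow> f z \<le> B" and \<epsilon>: "0 < \<epsilon>" and c: "c \<in> HP"
  obtains z0 where "z0 \<in> HP" "\<And>z. z \<in> HP \<Longrightarrow> f z - \<epsilon> * cosh_dist c z \<le> f z0 - \<epsilon> * cosh_dist c z0"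
proof -
  define w where "w z = f z - \<epsilon> * cosh_dist c z" for z
  define T where "T = {z \<in> HP. cosh_dist c z \<le> (B - f c) / \<epsilon> + 1}"
  have "c \<in> T"
    using B[OF c] \<epsilon> c by (simp add: T_def)
  moreover have "continuous_on HP w"
    unfolding w_def using f twice_diff_on_imp_continuous_on[OF twice_diff_on_cosh_dist[OF c]]
    by (intro continuous_intros)
  then have "continuous_on T w"
    by (rule continuous_on_subset) (auto simp: T_def)
  ultimately obtain z0 where z0: "z0 \<in> T" and z0_max: "\<And>z. z \<in> T \<Longrightarrow> w z \<le> w z0"
    using continuous_attains_sup[OF compact_cosh_dist_sublevel[OF c]] unfolding T_def by blast
  have "w z \<le> w z0" if z: "z \<in> HP" for z
  proof (cases "z \<in> T")
    case False
    then have "B - f c + \<epsilon> < \<epsilon> * cosh_dist c z"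
      using z \<epsilon> by (simp add: T_def field_simps)
    then have "w z < w c"
      using B[OF z] c by (simp add: w_def)
    also have "w c \<le> w z0"
      using z0_max \<open>c \<in> T\<close> .
    finally show ?thesis by simp
  qed (rule z0_max)
  moreover have "z0 \<in> HP" using z0 by (simp add: T_def)
  ultimately show thesis
    using that unfolding w_def by blast
qed

lemma le_half_of_Lop_ge:
  fixes f :: "complex \<Rightarrow> real"
  assumes f: "twice_diff_on f HP" and B: "\<And>z. z \<in> HP \<Longrightarrow> f z \<le> B"
    and N: "negligible N" and L: "\<And>z. z \<in> HP \<Longrightarrow> z \<notin> N \<Longrightarrow> - M \<le> Lop f z"
    and x0: "x0 \<in> HP"
  shows "f x0 \<le> M / 2"
proof (rule field_le_epsilon)
  fix e :: real assume "0 < e"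
  define \<epsilon> where "\<epsilon> = e / 2"
  have \<epsilon>: "0 < \<epsilon>" using \<open>0 < e\<close> by (simp add: \<epsilon>_def)
  define w where "w = (\<lambda>z. f z - \<epsilon> * cosh_dist x0 z)"
  have w: "twice_diff_on w HP"
    unfolding w_def by (rule twice_diff_on_minus_cosh_dist[OF f x0])
  have Lop_w: "Lop w z = Lop f z" if "z \<in> HP" for z
    unfolding w_def by (rule Lop_minus_cosh_dist[OF f x0 that])
  obtain z0 where z0: "z0 \<in> HP" and z0_max: "\<And>z. z \<in> HP \<Longrightarrow> w z \<le> w z0"
    using cosh_dist_penalized_attains_max[OF twice_diff_on_imp_continuous_on[OF f] B \<epsilon> x0]
    unfolding w_def by auto
  define \<rho> where "\<rho> = Im z0 / 2"
  have \<rho>: "0 < \<rho>" using z0 by (simp add: \<rho>_def mem_HP_iff)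
  have ball: "cball z0 \<rho> \<subseteq> HP"
    using \<rho> by (intro cball_subset_HP) (simp add: \<rho>_def)
  \<comment> \<open>Since \<open>Im z1 < 3 * \<rho>\<close>, the perturbation costs at most \<open>19 * \<delta> * \<rho>\<^sup>2\<close>.\<close>
  define \<delta> where "\<delta> = \<epsilon> / (19 * \<rho>\<^sup>2)"
  have \<delta>: "0 < \<delta>" using \<epsilon> \<rho> by (simp add: \<delta>_def)
  obtain z1 where z1: "z1 \<in> ball z0 \<rho>" "z1 \<notin> N" and near_max: "w z0 \<le> w z1 + \<delta> * \<rho>\<^sup>2"
      and hlap_w: "hlap w z1 \<le> 4 * \<delta> * (Im z1)\<^sup>2"
    using perturbed_maximum_off_negligible[OF open_HP w N \<delta> \<rho> ball] z0_max ball by blast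
  have z1_HP: "z1 \<in> HP" using z1 ball by auto
  have "Im z1 - Im z0 \<le> dist z0 z1"
    using abs_Im_le_cmod[of "z1 - z0"] by (simp add: dist_norm norm_minus_commute)
  then have "Im z1 \<le> 3 * \<rho>"
    using z1 by (simp add: \<rho>_def)
  then have "(Im z1)\<^sup>2 \<le> (3 * \<rho>)\<^sup>2"
    using z1_HP by (intro power_mono) (simp_all add: mem_HP_iff)
  then have "4 * \<delta> * (Im z1)\<^sup>2 \<le> 4 * \<delta> * (3 * \<rho>)\<^sup>2"
    using \<delta> by simp
  moreover have "2 * w z1 = hlap w z1 - Lop w z1"
    by (simp add: Lop_def)
  ultimately have "w z1 \<le> 18 * \<delta> * \<rho>\<^sup>2 + M / 2"
    using hlap_w Lop_w[OF z1_HP] L[OF z1_HP z1(2)] by (simp add: power_mult_distrib)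
  moreover have "f x0 - \<epsilon> \<le> w z0"
    using z0_max[OF x0] x0 by (simp add: w_def)
  moreover have "19 * \<delta> * \<rho>\<^sup>2 = \<epsilon>"
    using \<rho> by (simp add: \<delta>_def)
  ultimately show "f x0 \<le> M / 2 + e"
    using near_max by (simp add: \<epsilon>_def)
qed

lemma le_of_Lop_vanishing_on_hball:
  fixes f :: "complex \<Rightarrow> real"
  assumes f: "twice_diff_on f HP" and M: "\<And>z. z \<in> HP \<Longrightarrow> f z \<le> M"
    and x: "x \<in> HP" and r: "0 \<le> r" and L: "\<And>z. z \<in> hball x r \<Longrightarrow> Lop f z = 0"
  shows "f x \<le> M / cosh r"
proof -
  define A where "A = M / cosh r"
  define G where "G = (\<lambda>z. f z - A * cosh_dist x z)"
  have G: "twice_diff_on G HP"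
    unfolding G_def by (rule twice_diff_on_minus_cosh_dist[OF f x])
  define T where "T = {z \<in> HP. cosh_dist x z \<le> cosh r}"
  have "x \<in> T"
    using x cosh_real_ge_1[of r] by (simp add: T_def)
  moreover have "continuous_on T G"
    using twice_diff_on_imp_continuous_on[OF G] by (rule continuous_on_subset) (auto simp: T_def)
  ultimately obtain z1 where z1: "z1 \<in> T" and z1_max: "\<And>z. z \<in> T \<Longrightarrow> G z \<le> G z1"
    using continuous_attains_sup[OF compact_cosh_dist_sublevel[OF x]] unfolding T_def by blast
  have z1_HP: "z1 \<in> HP" using z1 by (simp add: T_def)
  have "G z1 \<le> 0"
  proof (cases "z1 \<in> hball x r")
    case True
    then obtain e where e: "0 < e" and ball: "ball z1 e \<subseteq> hball x r"
      using open_hball[OF x r] open_contains_ball by blast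
    moreover have "hball x r \<subseteq> T"
      using r x by (auto simp: hball_eq_cosh_dist_sublevel T_def)
    ultimately have "hlap G z1 \<le> 0"
      using local_max_partials(3)[OF G _ e] z1_max hball_def by blast
    moreover have "Lop G z1 = 0"
      unfolding G_def using Lop_minus_cosh_dist[OF f x z1_HP] L[OF True] by simp
    ultimately show ?thesis
      by (simp add: Lop_def)
  next
    case False
    with z1 x r have "cosh_dist x z1 = cosh r"
      by (auto simp: T_def hball_eq_cosh_dist_sublevel)
    then show ?thesis
      using M[OF z1_HP] by (simp add: G_def A_def)
  qed
  moreover have "G x = f x - A"
    using x by (simp add: G_def)
  ultimately show ?thesis
    using z1_max[OF \<open>x \<in> T\<close>] by (simp add: A_def)
qed

lemma abs_le_exp_of_Lop_vanishing_on_hball: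
  fixes f :: "complex \<Rightarrow> real"
  assumes f: "twice_diff_on f HP" and B: "\<And>z. z \<in> HP \<Longrightarrow> \<bar>f z\<bar> \<le> B"
    and N: "negligible N" and L: "\<And>z. z \<in> HP \<Longrightarrow> z \<notin> N \<Longrightarrow> \<bar>Lop f z\<bar> \<le> M"
    and M: "0 \<le> M" and x: "x \<in> HP" and r: "0 \<le> r" and vanish: "\<And>z. z \<in> hball x r \<Longrightarrow> Lop f z = 0"
  shows "\<bar>f x\<bar> \<le> exp (- r) * M"
proof -
  have one_sided: "g x \<le> M / (2 * cosh r)"
    if g: "twice_diff_on g HP" "\<And>z. z \<in> HP \<Longrightarrow> g z \<le> B"
      "\<And>z. z \<in> HP \<Longrightarrow> z \<notin> N \<Longrightarrow> - M \<le> Lop g z" "\<And>z. z \<in> hball x r \<Longrightarrow> Lop g z = 0" for g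
  proof -
    have "\<And>z. z \<in> HP \<Longrightarrow> g z \<le> M / 2"
      using le_half_of_Lop_ge[OF g(1,2) N g(3)] .
    from le_of_Lop_vanishing_on_hball[OF g(1) this x r g(4)] show ?thesis
      by simp
  qed
  have "f x \<le> M / (2 * cosh r)"
  proof (rule one_sided[OF f])
    show "f z \<le> B" if "z \<in> HP" for z
      using B[OF that] by simp
    show "- M \<le> Lop f z" if "z \<in> HP" "z \<notin> N" for z
      using L[OF that] by simp
  qed (rule vanish)
  moreover have "(\<lambda>z. - f z) x \<le> M / (2 * cosh r)"
  proof (rule one_sided[OF twice_diff_on_uminus[OF open_HP f]])
    show "- f z \<le> B" if "z \<in> HP" for z
      using B[OF that] by simp
    show "- M \<le> Lop (\<lambda>z. - f z) z" if "z \<in> HP" "z \<notin> N" for z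
      using L[OF that] Lop_uminus[OF open_HP f that(1)] by simp
    show "Lop (\<lambda>z. - f z) z = 0" if "z \<in> hball x r" for z
      using vanish[OF that] Lop_uminus[OF open_HP f] that by (simp add: hball_def)
  qed
  moreover have "M / (2 * cosh r) \<le> exp (- r) * M"
  proof -
    have "exp r \<le> 2 * cosh r"
      by (simp add: cosh_def)
    then have "M / (2 * cosh r) \<le> M / exp r"
      using M by (intro divide_left_mono) auto
    then show ?thesis
      by (simp add: exp_minus field_simps)
  qed
  ultimately show ?thesis
    by linarith
qed

lemma zero_outside_supp_HP:
  assumes "z \<in> HP" "z \<notin> supp_HP g"
  shows "g z = 0"
proof (rule ccontr)
  assume "g z \<noteq> 0"
  with assms(1) have "z \<in> closure {w \<in> HP. g w \<noteq> 0}"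
    by (intro closure_subset[THEN subsetD]) simp
  with assms show False
    by (simp add: supp_HP_def)
qed

lemma esssup_lebesgue_on_bound:
  fixes g :: "'a::euclidean_space \<Rightarrow> real"
  assumes S: "S \<in> sets lebesgue" "\<not> negligible S" and g: "\<And>z. 0 \<le> g z"
    and finite: "esssup (lebesgue_on S) (\<lambda>z. ereal (g z)) \<noteq> \<infinity>"
  obtains M N where "esssup (lebesgue_on S) (\<lambda>z. ereal (g z)) = ereal M" "0 \<le> M" "negligible N"
    "\<And>z. z \<in> S \<Longrightarrow> z \<notin> N \<Longrightarrow> g z \<le> M"
proof -
  let ?E = "esssup (lebesgue_on S) (\<lambda>z. ereal (g z))"
  have "AE z in lebesgue_on S. ereal (g z) \<le> ?E"
    by (rule esssup_AE)
  then obtain N where N: "{z \<in> S. \<not> ereal (g z) \<le> ?E} \<subseteq> N" "N \<in> null_sets (lebesgue_on S)"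
    by (rule AE_E) (auto simp: null_sets_def space_restrict_space)
  then have "negligible N"
    using null_sets_restrict_space[OF S(1)] by (simp add: negligible_iff_null_sets)
  then obtain z where z: "z \<in> S" "z \<notin> N"
    using S(2) negligible_subset by blast
  then have "ereal (g z) \<le> ?E"
    using N(1) by auto
  then have "0 \<le> ?E"
    using g[of z] by (simp add: order_trans[rotated])
  with finite obtain M where "?E = ereal M" "0 \<le> M"
    by (cases ?E) auto
  with N(1) \<open>negligible N\<close> show thesis
    by (intro that) auto
qed

theorem lemma2p3:
  fixes \<Gamma> :: "mat2 set" and R :: real
  assumes "cuspfree_surface_group \<Gamma>" and "R > 0"
  shows "\<exists>C>0. \<forall>(f :: complex \<Rightarrow> real) x r.
           invariant_fun \<Gamma> f \<and> twice_diff_on f HP \<and>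
           bounded (f ` HP) \<and> bounded (Lop f ` HP) \<and>
           x \<in> HP \<and> r \<ge> R \<and> hball x r \<inter> supp_HP (Lop f) = {}
           \<longrightarrow> ereal \<bar>f x\<bar> \<le> ereal (C * exp (- r)) *
                  esssup (lebesgue_on HP) (\<lambda>w. ereal \<bar>Lop f w\<bar>)"
proof (intro exI[of _ 1] conjI allI impI)
  fix f :: "complex \<Rightarrow> real" and x r
  assume "invariant_fun \<Gamma> f \<and> twice_diff_on f HP \<and> bounded (f ` HP) \<and> bounded (Lop f ` HP) \<and>
    x \<in> HP \<and> r \<ge> R \<and> hball x r \<inter> supp_HP (Lop f) = {}"
  then have f: "twice_diff_on f HP" and "bounded (f ` HP)" and x: "x \<in> HP" and r: "0 \<le> r"
    and disjoint: "hball x r \<inter> supp_HP (Lop f) = {}"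
    using \<open>R > 0\<close> by auto
  then obtain B where B: "\<And>z. z \<in> HP \<Longrightarrow> \<bar>f z\<bar> \<le> B"
    unfolding bounded_iff by auto
  have vanish: "Lop f z = 0" if "z \<in> hball x r" for z
    using that disjoint zero_outside_supp_HP by (auto simp: hball_def)
  show "ereal \<bar>f x\<bar> \<le> ereal (1 * exp (- r)) * esssup (lebesgue_on HP) (\<lambda>w. ereal \<bar>Lop f w\<bar>)"
  proof (cases "esssup (lebesgue_on HP) (\<lambda>w. ereal \<bar>Lop f w\<bar>) = \<infinity>")
    case False
    then obtain M N where "esssup (lebesgue_on HP) (\<lambda>w. ereal \<bar>Lop f w\<bar>) = ereal M" "0 \<le> M"
      "negligible N" "\<And>z. z \<in> HP \<Longrightarrow> z \<notin> N \<Longrightarrow> \<bar>Lop f z\<bar> \<le> M"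
      by (rule esssup_lebesgue_on_bound[OF HP_lebesgue not_negligible_HP abs_ge_zero]) blast
    with abs_le_exp_of_Lop_vanishing_on_hball[OF f B _ _ _ x r vanish] show ?thesis
      by simp
  qed simp
qed simp

end
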